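(* In the setting below, $C_2^\perp\subseteq C_1$, $\dim C_1-\dim C_2^\perp=k-m+s$, and every vector in $(C_1\setminus C_2^\perp)\cup(C_2\setminus C_1^\perp)$ has Hamming weight at least $\min(q-k,m)-s+1$. Consequently $\mathrm{CSS}(C_1,C_2)$ is a quantum CSS code over $\mathbb F_q$ with length $q-s$, dimension $k-m+s$ and distance at least $\min(q-k,m)-s+1$.
   Context: Let $q=2^l$ ($l\ge2$) and $\mathbb F_q$ the field with $q$ elements. Fix integers $k,m,s$ with $q/3\ge k\ge m\ge s>0$ and $2k\le q-m$. Fix $A\subseteq\mathbb F_q$ with $|A|=k$, $B\subseteq A$ with $|B|=s$, and let $M=\mathbb F_q\setminus B$. For $d\in\mathbb N$, $\mathbb F_q[x]_{<d}$ denotes the polynomials of degree $<d$ (including $0$). The evaluation map $\phi_M:\mathbb F_q[x]\to\mathbb F_q^M$ is $P\mapsto(P(\alpha))_{\alpha\in M}$. Let $C_1=\phi_M(\mathbb F_q[x]_{<k})$, $C_2^\perp=\phi_M(\{P\in\mathbb F_q[x]_{<m}:P(b)=0\ \forall b\in B\})$, and $C_2=\{v\in\mathbb F_q^M:\sum_{\alpha\in M}v_\alpha w_\alpha=0\ \forall w\in C_2^\perp\}$; $C_1^\perp$ is defined analogously. For linear codes $C_2^\perp\subseteq C_1$ in $\mathbb F_q^M$, $\mathrm{CSS}(C_1,C_2)$ is the span of the states $\sum_{\alpha\in C_2^\perp}|c+\alpha\rangle$, $c\in C_1$, its dimension is $\dim C_1-\dim C_2^\perp$ and its distance is the minimum Hamming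 weight of $(C_1\setminus C_2^\perp)\cup(C_2\setminus C_1^\perp)$. *)

theory Defs
  imports "HOL-Computational_Algebra.Polynomial" "HOL-Library.Function_Algebras" "HOL-Library.Cardinality"
begin

text \<open>Vectors of F_q^M are represented as functions 'a => 'a vanishing outside M.
  Scalar multiplication is pointwise.\<close>

definition fscale :: "'a::field \<Rightarrow> ('a \<Rightarrow> 'a) \<Rightarrow> ('a \<Rightarrow> 'a)" where
  "fscale c v = (\<lambda>x. c * v x)"

definition code_dim :: "('a::field \<Rightarrow> 'a) set \<Rightarrow> nat" where
  "code_dim C = vector_space.dim fscale C"

definition vecs_on :: "'a::field set \<Rightarrow> ('a \<Rightarrow> 'a) set" where
  "vecs_on M = {v. \<forall>x. x \<notin> M \<longrightarrow> v x = 0}"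

definition eval_map :: "'a::field set \<Rightarrow> 'a poly \<Rightarrow> ('a \<Rightarrow> 'a)" where
  "eval_map M P = (\<lambda>\<alpha>. if \<alpha> \<in> M then poly P \<alpha> else 0)"

definition polys_lt :: "nat \<Rightarrow> 'a::field poly set" where
  "polys_lt d = {P. P = 0 \<or> degree P < d}"

definition dual_code :: "'a::field set \<Rightarrow> ('a \<Rightarrow> 'a) set \<Rightarrow> ('a \<Rightarrow> 'a) set" where
  "dual_code M C = {v \<in> vecs_on M. \<forall>w \<in> C. (\<Sum>\<alpha>\<in>M. v \<alpha> * w \<alpha>) = 0}"

definition hweight :: "'a::field set \<Rightarrow> ('a \<Rightarrow> 'a) \<Rightarrow> nat" where
  "hweight M v = card {\<alpha> \<in> M. v \<alpha> \<noteq> 0}"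

definition css_dim :: "('a::field \<Rightarrow> 'a) set \<Rightarrow> ('a \<Rightarrow> 'a) set \<Rightarrow> nat" where
  "css_dim C1 C2perp = code_dim C1 - code_dim C2perp"

definition css_distance :: "'a::field set \<Rightarrow> ('a \<Rightarrow> 'a) set \<Rightarrow> ('a \<Rightarrow> 'a) set \<Rightarrow> nat" where
  "css_distance M C1 C2 =
     (let C1perp = dual_code M C1; C2perp = dual_code M C2 in
      Min (hweight M ` ((C1 - C2perp) \<union> (C2 - C1perp))))"

end

theory Submission
  imports Defs
begin

text \<open>
  With \<open>g = (\<Prod>b\<in>B. x - b)\<close>, the code \<open>C2perp\<close> consists of the evaluations of the multiples
  \<open>g * Q\<close> with \<open>deg Q < m - s\<close>, and \<open>g\<close> has no root on \<open>M\<close>. Both codes are thus evaluation codes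
  of polynomials of degree below \<open>|M|\<close>, so their dimensions are \<open>k\<close> and \<open>m - s\<close>.
  A nonzero word of \<open>C1\<close> has weight at least \<open>|M| - (k - 1) \<ge> m - s + 1\<close>, since a nonzero
  polynomial of degree \<open>< k\<close> has fewer than \<open>k\<close> roots. A nonzero word \<open>v\<close> of \<open>C2\<close> cannot have a
  support \<open>S\<close> with \<open>|S| \<le> m - s\<close>: for \<open>a \<in> S\<close>, pairing \<open>v\<close> with \<open>g * (\<Prod>\<beta>\<in>S - {a}. x - \<beta>)\<close> leaves
  the single nonzero term at \<open>a\<close>. Finally \<open>C2 - C1perp\<close> is nonempty: on a set \<open>T\<close> of \<open>m - s + 1\<close>
  points, the word \<open>\<alpha> \<mapsto> 1 / (g(\<alpha>) * (\<Prod>\<beta>\<in>T - {\<alpha>}. \<alpha> - \<beta>))\<close> is orthogonal to \<open>C2perp\<close>, because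
  the top coefficient of the Lagrange interpolant of a polynomial of degree \<open>< |T| - 1\<close> vanishes,
  but not to \<open>\<Prod>\<beta>\<in>T - {a}. x - \<beta>\<close>, which lies in \<open>C1\<close>.
\<close>

interpretation fvec: vector_space "fscale :: 'a::field \<Rightarrow> ('a \<Rightarrow> 'a) \<Rightarrow> ('a \<Rightarrow> 'a)"
  by unfold_locales (auto simp: fscale_def fun_eq_iff algebra_simps)

lemma eval_map_0 [simp]: "eval_map M 0 = 0"
  by (auto simp: eval_map_def fun_eq_iff)

lemma eval_map_apply: "\<alpha> \<in> M \<Longrightarrow> eval_map M P \<alpha> = poly P \<alpha>"
  by (simp add: eval_map_def)

lemma eval_map_add: "eval_map M (p + q) = eval_map M p + eval_map M q"
  by (auto simp: eval_map_def fun_eq_iff)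

lemma eval_map_diff: "eval_map M (p - q) = eval_map M p - eval_map M q"
  by (auto simp: eval_map_def fun_eq_iff)

lemma eval_map_smult: "eval_map M (smult c p) = fscale c (eval_map M p)"
  by (auto simp: eval_map_def fscale_def fun_eq_iff)

lemma eval_map_sum: "eval_map M (\<Sum>i\<in>S. f i) = (\<Sum>i\<in>S. eval_map M (f i))"
  by (induction S rule: infinite_finite_induct) (auto simp: eval_map_add)

lemma poly_eq_0_if_roots_exceed_degree:
  fixes P :: "'a::field poly"
  assumes "finite S" "\<And>x. x \<in> S \<Longrightarrow> poly P x = 0" "degree P < card S"
  shows "P = 0"
proof (rule ccontr)
  assume "P \<noteq> 0"
  hence "card S \<le> card {x. poly P x = 0}"
    using assms by (intro card_mono poly_roots_finite) auto
  also have "\<dots> \<le> degree P" using \<open>P \<noteq> 0\<close> by (rule card_poly_roots_bound)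
  finally show False using assms(3) by linarith
qed

lemma eval_map_eq_0_imp_eq_0:
  fixes P :: "'a::field poly"
  assumes "finite M" "eval_map M P = 0" "degree P < card M"
  shows "P = 0"
proof (rule poly_eq_0_if_roots_exceed_degree[OF assms(1) _ assms(3)])
  fix x assume "x \<in> M"
  thus "poly P x = 0" using fun_cong[OF assms(2), of x] by (simp add: eval_map_apply)
qed

lemma card_le_hweight_eval_map_add_degree:
  fixes P :: "'a::field poly"
  assumes "finite M" "P \<noteq> 0"
  shows "card M \<le> hweight M (eval_map M P) + degree P"
proof -
  define W where "W = {\<alpha> \<in> M. poly P \<alpha> \<noteq> 0}"
  define Z where "Z = {\<alpha> \<in> M. poly P \<alpha> = 0}"
  have "card M = card W + card Z"
    using assms(1) by (subst card_Un_disjoint[symmetric]) (auto simp: W_def Z_def intro: arg_cong[where f = card])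
  moreover have "card Z \<le> degree P"
  proof -
    have "card Z \<le> card {x. poly P x = 0}"
      using assms(2) by (intro card_mono poly_roots_finite) (auto simp: Z_def)
    thus ?thesis using card_poly_roots_bound[OF assms(2)] by linarith
  qed
  moreover have "hweight M (eval_map M P) = card W"
    by (auto simp: hweight_def W_def eval_map_apply intro: arg_cong[where f = card])
  ultimately show ?thesis by linarith
qed

lemma polys_lt_0 [simp]: "0 \<in> polys_lt n"
  by (simp add: polys_lt_def)

lemma mult_in_polys_lt_iff:
  fixes h Q :: "'a::field poly"
  assumes "h \<noteq> 0" "degree h \<le> m"
  shows "h * Q \<in> polys_lt m \<longleftrightarrow> Q \<in> polys_lt (m - degree h)"
  using assms by (cases "Q = 0") (auto simp: polys_lt_def degree_mult_eq)

lemma coeff_sum_monom: "coeff (\<Sum>i<n. monom (c i) i) j = (if j < n then c j else 0)"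
  by (simp add: coeff_sum)

lemma sum_monom_in_polys_lt: "(\<Sum>i<n. monom (c i) i) \<in> polys_lt n"
proof (cases "n = 0")
  case False
  have "degree (\<Sum>i<n. monom (c i) i) \<le> n - 1"
    by (rule degree_le) (auto simp: coeff_sum_monom)
  hence "degree (\<Sum>i<n. monom (c i) i) < n" using False by linarith
  thus ?thesis by (simp add: polys_lt_def)
qed (simp add: polys_lt_def)

lemma polys_lt_eq_sum_monom:
  assumes "Q \<in> polys_lt n"
  shows "Q = (\<Sum>i<n. monom (coeff Q i) i)"
  using assms by (intro poly_eqI) (auto simp: coeff_sum_monom polys_lt_def coeff_eq_0)

section \<open>Vanishing polynomials and Lagrange interpolation\<close>

definition vanishing_poly :: "'a::field set \<Rightarrow> 'a poly" where
  "vanishing_poly S = (\<Prod>b\<in>S. [:-b, 1:])"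

lemma poly_vanishing_poly_eq_0_iff: "finite S \<Longrightarrow> poly (vanishing_poly S) x = 0 \<longleftrightarrow> x \<in> S"
  by (simp add: vanishing_poly_def poly_prod)

lemma degree_vanishing_poly: "finite S \<Longrightarrow> degree (vanishing_poly S) = card S"
  by (simp add: vanishing_poly_def degree_prod_eq_sum_degree)

lemma lead_coeff_vanishing_poly: "lead_coeff (vanishing_poly S) = 1"
  by (simp add: vanishing_poly_def lead_coeff_prod)

lemma vanishing_poly_nonzero: "vanishing_poly S \<noteq> 0"
  using lead_coeff_vanishing_poly[of S] by (metis coeff_0 zero_neq_one)

lemma vanishing_poly_dvd:
  fixes P :: "'a::field poly"
  assumes "finite B" "\<forall>b\<in>B. poly P b = 0"
  shows "vanishing_poly B dvd P"
  using assms
proof (induction B rule: finite_induct)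
  case empty
  then show ?case by (simp add: vanishing_poly_def)
next
  case (insert b B)
  then obtain R where R: "P = vanishing_poly B * R" by auto
  have "poly (vanishing_poly B) b \<noteq> 0" using insert by (simp add: poly_vanishing_poly_eq_0_iff)
  with R insert.prems have "poly R b = 0" by simp
  then obtain R' where "R = [:-b, 1:] * R'" by (metis dvdE poly_eq_0_iff_dvd)
  moreover have "vanishing_poly (insert b B) = [:-b, 1:] * vanishing_poly B"
    using insert.hyps by (simp add: vanishing_poly_def)
  ultimately have "P = vanishing_poly (insert b B) * R'" using R by (simp only: mult_ac)
  then show ?case by simp
qed

lemma vanishing_multiples_polys_lt:
  assumes "finite B" "card B \<le> m"
  shows "{P \<in> polys_lt m. \<forall>b\<in>B. poly P b = 0}
    = {vanishing_poly B * Q | Q. Q \<in> polys_lt (m - card B)}"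
proof -
  have mult_iff: "vanishing_poly B * Q \<in> polys_lt m \<longleftrightarrow> Q \<in> polys_lt (m - card B)" for Q
    using mult_in_polys_lt_iff[where h = "vanishing_poly B" and m = m and Q = Q] assms
    by (simp add: vanishing_poly_nonzero degree_vanishing_poly)
  have "P \<in> polys_lt m \<and> (\<forall>b\<in>B. poly P b = 0)
      \<longleftrightarrow> (\<exists>Q. P = vanishing_poly B * Q \<and> Q \<in> polys_lt (m - card B))" for P
  proof
    assume P: "P \<in> polys_lt m \<and> (\<forall>b\<in>B. poly P b = 0)"
    then obtain Q where "P = vanishing_poly B * Q"
      using vanishing_poly_dvd[OF assms(1)] by (blast elim: dvdE)
    with P mult_iff show "\<exists>Q. P = vanishing_poly B * Q \<and> Q \<in> polys_lt (m - card B)" by blast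
  qed (use mult_iff assms(1) in \<open>auto simp: poly_vanishing_poly_eq_0_iff\<close>)
  thus ?thesis by blast
qed

lemma lagrange_interpolation:
  fixes Q :: "'a::field poly"
  assumes T: "finite T" and Q: "Q \<in> polys_lt (card T)"
  shows "Q = (\<Sum>\<alpha>\<in>T. smult (poly Q \<alpha> / poly (vanishing_poly (T - {\<alpha>})) \<alpha>) (vanishing_poly (T - {\<alpha>})))"
    (is "Q = ?L")
proof (cases "T = {}")
  case True
  with Q show ?thesis by (simp add: polys_lt_def)
next
  case False
  have "poly ?L \<gamma> = poly Q \<gamma>" if "\<gamma> \<in> T" for \<gamma>
  proof -
    have "poly ?L \<gamma> = (\<Sum>\<alpha>\<in>T. poly Q \<alpha> / poly (vanishing_poly (T - {\<alpha>})) \<alpha>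
                                * poly (vanishing_poly (T - {\<alpha>})) \<gamma>)"
      by (simp add: poly_sum)
    also have "\<dots> = poly Q \<gamma>"
      using that T by (subst sum.mono_neutral_right[of T "{\<gamma>}"]) (auto simp: poly_vanishing_poly_eq_0_iff)
    finally show ?thesis .
  qed
  moreover have "degree ?L \<le> card T - 1"
    using T by (intro degree_sum_le order.trans[OF degree_smult_le]) (auto simp: degree_vanishing_poly)
  hence "degree (Q - ?L) < card T"
    using Q False T degree_diff_le_max[of Q ?L] by (auto simp: polys_lt_def card_gt_0_iff)
  ultimately have "Q - ?L = 0" by (intro poly_eq_0_if_roots_exceed_degree[OF T]) auto
  thus ?thesis by simp
qed

text \<open>Compare the coefficients of \<open>x ^ (|T| - 1)\<close> in the Lagrange interpolation formula.\<close>

lemma sum_div_poly_vanishing_poly_eq_0: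
  fixes Q :: "'a::field poly"
  assumes T: "finite T" and Q: "Q \<in> polys_lt (card T - 1)"
  shows "(\<Sum>\<alpha>\<in>T. poly Q \<alpha> / poly (vanishing_poly (T - {\<alpha>})) \<alpha>) = 0"
proof -
  have lead: "coeff (vanishing_poly (T - {\<alpha>})) (card T - 1) = 1" if "\<alpha> \<in> T" for \<alpha>
    using that T lead_coeff_vanishing_poly[of "T - {\<alpha>}"] by (simp add: degree_vanishing_poly)
  have "Q \<in> polys_lt (card T)" using Q by (auto simp: polys_lt_def)
  hence "coeff Q (card T - 1) = (\<Sum>\<alpha>\<in>T. poly Q \<alpha> / poly (vanishing_poly (T - {\<alpha>})) \<alpha>
                                  * coeff (vanishing_poly (T - {\<alpha>})) (card T - 1))"
    by (subst lagrange_interpolation[OF T]) (simp_all add: coeff_sum)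
  also have "\<dots> = (\<Sum>\<alpha>\<in>T. poly Q \<alpha> / poly (vanishing_poly (T - {\<alpha>})) \<alpha>)"
    by (intro sum.cong refl) (use lead in simp)
  finally have "coeff Q (card T - 1) = (\<Sum>\<alpha>\<in>T. poly Q \<alpha> / poly (vanishing_poly (T - {\<alpha>})) \<alpha>)" .
  moreover have "coeff Q (card T - 1) = 0"
    using Q by (auto simp: polys_lt_def coeff_eq_0)
  ultimately show ?thesis by simp
qed

section \<open>Evaluation codes of multiples of a fixed polynomial\<close>

lemma eval_map_mult_eq_0_imp_eq_0:
  fixes h Q :: "'a::field poly"
  assumes "finite M" "h \<noteq> 0" "degree h + n \<le> card M" "Q \<in> polys_lt n"
    and "eval_map M (h * Q) = 0"
  shows "Q = 0"
proof (rule ccontr)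
  assume "Q \<noteq> 0"
  hence "degree (h * Q) < card M"
    using assms(2-4) by (auto simp: polys_lt_def degree_mult_eq)
  hence "h * Q = 0" using eval_map_eq_0_imp_eq_0 assms(1,5) by blast
  with \<open>Q \<noteq> 0\<close> assms(2) show False by simp
qed

lemma code_dim_eval_map_multiples:
  fixes h :: "'a::field poly"
  assumes M: "finite M" and h: "h \<noteq> 0" and hn: "degree h + n \<le> card M"
  shows "code_dim (eval_map M ` {h * Q | Q. Q \<in> polys_lt n}) = n"
proof -
  define V where "V = eval_map M ` {h * Q | Q. Q \<in> polys_lt n}"
  define E where "E i = eval_map M (h * monom 1 i)" for i
  note eval_inj = eval_map_mult_eq_0_imp_eq_0[OF M h hn]
  have comb: "(\<Sum>i<n. fscale (c i) (E i)) = eval_map M (h * (\<Sum>i<n. monom (c i) i))" for c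
    by (simp add: E_def eval_map_sum eval_map_smult[symmetric] sum_distrib_left
        mult_smult_right[symmetric] smult_monom)
  have inj: "inj_on E {..<n}"
  proof
    fix i j assume ij: "i \<in> {..<n}" "j \<in> {..<n}" "E i = E j"
    have "degree (monom (1::'a) i - monom 1 j) \<le> max i j"
      using degree_diff_le_max[of "monom (1::'a) i" "monom 1 j"] by (simp add: degree_monom_eq)
    hence "monom (1::'a) i - monom 1 j \<in> polys_lt n" using ij by (auto simp: polys_lt_def)
    moreover have "eval_map M (h * (monom 1 i - monom 1 j)) = 0"
      using ij by (simp add: E_def right_diff_distrib eval_map_diff)
    ultimately have "monom (1::'a) i - monom 1 j = 0" by (rule eval_inj)
    thus "i = j" by (simp add: monom_eq_iff')
  qed
  have coeffs_0: "c i = 0" if "(\<Sum>i<n. fscale (c i) (E i)) = 0" "i < n" for c i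
  proof -
    have "(\<Sum>i<n. monom (c i) i) = 0"
      using that(1) comb[of c] by (intro eval_inj[OF sum_monom_in_polys_lt]) simp
    thus ?thesis using that(2) coeff_sum_monom[of c n i] by simp
  qed
  have "fvec.independent (E ` {..<n})"
  proof
    assume "fvec.dependent (E ` {..<n})"
    then obtain u i where "i < n" "u (E i) \<noteq> 0" "(\<Sum>j<n. fscale (u (E j)) (E j)) = 0"
      by (auto simp: fvec.dependent_finite sum.reindex[OF inj])
    with coeffs_0[of "\<lambda>j. u (E j)"] show False by auto
  qed
  moreover have "E ` {..<n} \<subseteq> V"
  proof
    fix v assume "v \<in> E ` {..<n}"
    then obtain i where "i < n" "v = E i" by auto
    moreover have "monom 1 i \<in> polys_lt n" using \<open>i < n\<close> by (simp add: polys_lt_def degree_monom_eq)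
    ultimately show "v \<in> V" by (auto simp: V_def E_def)
  qed
  moreover have "V \<subseteq> fvec.span (E ` {..<n})"
  proof
    fix v assume "v \<in> V"
    then obtain Q where Q: "Q \<in> polys_lt n" and v: "v = eval_map M (h * Q)" by (auto simp: V_def)
    have "h * Q = h * (\<Sum>i<n. monom (coeff Q i) i)"
      using polys_lt_eq_sum_monom[OF Q] by (rule arg_cong)
    hence "v = (\<Sum>i<n. fscale (coeff Q i) (E i))" unfolding comb v by (rule arg_cong)
    also have "\<dots> \<in> fvec.span (E ` {..<n})"
      by (intro fvec.span_sum fvec.span_scale fvec.span_base) auto
    finally show "v \<in> fvec.span (E ` {..<n})" .
  qed
  ultimately have "card (E ` {..<n}) = fvec.dim V" by (intro fvec.basis_card_eq_dim)
  thus ?thesis using card_image[OF inj] by (simp add: code_dim_def V_def)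
qed

section \<open>Duality and weights\<close>

lemma zero_in_dual_code: "0 \<in> dual_code M C"
  by (simp add: dual_code_def vecs_on_def)

lemma subset_dual_dual_code: "C \<subseteq> vecs_on M \<Longrightarrow> C \<subseteq> dual_code M (dual_code M C)"
  by (auto simp: dual_code_def vecs_on_def mult.commute)

lemma hweight_dual_eval_map_multiples_gt:
  fixes g :: "'a::field poly"
  assumes M: "finite M" and g: "\<And>\<alpha>. \<alpha> \<in> M \<Longrightarrow> poly g \<alpha> \<noteq> 0"
    and v: "v \<in> dual_code M (eval_map M ` {g * Q | Q. Q \<in> polys_lt n})" and "v \<noteq> 0"
  shows "n < hweight M v"
proof (rule ccontr)
  define S where "S = {\<alpha> \<in> M. v \<alpha> \<noteq> 0}"
  assume "\<not> n < hweight M v"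
  hence card_S: "card S \<le> n" by (simp add: hweight_def S_def)
  obtain a where "v a \<noteq> 0" using \<open>v \<noteq> 0\<close> by (auto simp: fun_eq_iff)
  hence a: "a \<in> S" using v by (auto simp: S_def dual_code_def vecs_on_def)
  have finite_S: "finite S" using M by (simp add: S_def)
  define Q where "Q = vanishing_poly (S - {a})"
  have "card S > 0" using finite_S a by (auto simp: card_gt_0_iff)
  moreover have "degree Q = card S - 1" using finite_S a by (simp add: Q_def degree_vanishing_poly)
  ultimately have "degree Q < n" using card_S by linarith
  hence "Q \<in> polys_lt n" by (simp add: polys_lt_def)
  hence "(\<Sum>\<alpha>\<in>M. v \<alpha> * eval_map M (g * Q) \<alpha>) = 0"
    using v by (auto simp: dual_code_def)
  moreover have "(\<Sum>\<alpha>\<in>M. v \<alpha> * eval_map M (g * Q) \<alpha>) = v a * poly g a * poly Q a"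
    using M a finite_S
    by (subst sum.mono_neutral_right[of M "{a}"])
       (auto simp: S_def Q_def eval_map_apply poly_vanishing_poly_eq_0_iff)
  moreover have "poly Q a \<noteq> 0" using finite_S by (simp add: Q_def poly_vanishing_poly_eq_0_iff)
  ultimately show False using a g \<open>v a \<noteq> 0\<close> by (auto simp: S_def)
qed

lemma ex_dual_eval_map_multiples_not_dual:
  fixes g :: "'a::field poly"
  assumes M: "finite M" and g: "\<And>\<alpha>. \<alpha> \<in> M \<Longrightarrow> poly g \<alpha> \<noteq> 0"
    and "n < card M" "n < k"
  obtains v where "v \<in> dual_code M (eval_map M ` {g * Q | Q. Q \<in> polys_lt n})"
    "v \<notin> dual_code M (eval_map M ` polys_lt k)"
proof -
  obtain T where T: "T \<subseteq> M" "card T = n + 1"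
    using obtain_subset_with_card_n[of "n + 1" M] \<open>n < card M\<close> by auto
  hence finite_T: "finite T" using M finite_subset by blast
  obtain a where a: "a \<in> T" using T by fastforce
  define v where "v \<alpha> = (if \<alpha> \<in> T then 1 / (poly g \<alpha> * poly (vanishing_poly (T - {\<alpha>})) \<alpha>) else 0)"
    for \<alpha>
  have sum_T: "(\<Sum>\<alpha>\<in>M. v \<alpha> * f \<alpha>) = (\<Sum>\<alpha>\<in>T. v \<alpha> * f \<alpha>)" for f
    using T M by (intro sum.mono_neutral_right) (auto simp: v_def)
  have v_T: "v \<alpha> * poly g \<alpha> = 1 / poly (vanishing_poly (T - {\<alpha>})) \<alpha>" if "\<alpha> \<in> T" for \<alpha>
    using that T g[of \<alpha>] by (auto simp: v_def)
  have "v \<in> dual_code M (eval_map M ` {g * Q | Q. Q \<in> polys_lt n})"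
  proof -
    have "(\<Sum>\<alpha>\<in>M. v \<alpha> * eval_map M (g * Q) \<alpha>) = 0" if "Q \<in> polys_lt n" for Q
    proof -
      have "(\<Sum>\<alpha>\<in>M. v \<alpha> * eval_map M (g * Q) \<alpha>)
          = (\<Sum>\<alpha>\<in>T. poly Q \<alpha> / poly (vanishing_poly (T - {\<alpha>})) \<alpha>)"
        unfolding sum_T using T by (intro sum.cong) (auto simp: eval_map_apply mult.assoc[symmetric] v_T)
      thus ?thesis using sum_div_poly_vanishing_poly_eq_0[OF finite_T] that T by simp
    qed
    thus ?thesis using T by (auto simp: dual_code_def vecs_on_def v_def)
  qed
  moreover have "v \<notin> dual_code M (eval_map M ` polys_lt k)"
  proof -
    define P where "P = vanishing_poly (T - {a})"
    have "P \<in> polys_lt k"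
      using finite_T a T \<open>n < k\<close> by (simp add: P_def polys_lt_def degree_vanishing_poly)
    moreover have "(\<Sum>\<alpha>\<in>M. v \<alpha> * eval_map M P \<alpha>) = v a * poly P a"
      unfolding sum_T using finite_T a T
      by (subst sum.mono_neutral_right[of T "{a}"])
         (auto simp: P_def eval_map_apply poly_vanishing_poly_eq_0_iff)
    moreover have "v a * poly P a \<noteq> 0"
      using a T g[of a] finite_T by (auto simp: v_def P_def poly_vanishing_poly_eq_0_iff)
    ultimately show ?thesis unfolding dual_code_def by fastforce
  qed
  ultimately show ?thesis by (rule that)
qed

lemma css_distance_ge:
  assumes M: "finite M" and "C2perp \<subseteq> vecs_on M" and C2: "C2 = dual_code M C2perp"
    and "C2 - dual_code M C1 \<noteq> {}"
    and weight: "\<And>v. v \<in> (C1 - C2perp) \<union> (C2 - dual_code M C1) \<Longrightarrow> d \<le> hweight M v"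
  shows "d \<le> css_distance M C1 C2"
proof -
  define X where "X = (C1 - dual_code M C2) \<union> (C2 - dual_code M C1)"
  have "C2perp \<subseteq> dual_code M C2" using assms(2) C2 by (simp add: subset_dual_dual_code)
  hence "\<forall>v\<in>X. d \<le> hweight M v" using weight by (auto simp: X_def)
  moreover have "X \<noteq> {}" using assms(4) by (auto simp: X_def)
  moreover have "finite (hweight M ` X)"
    by (rule finite_subset[of _ "{..card M}"]) (auto simp: hweight_def M intro: card_mono)
  ultimately show ?thesis by (simp add: css_distance_def X_def Let_def)
qed

theorem proposition5p6:
  fixes l k m s :: nat
    and A B :: "'a::{field,finite} set"
  assumes q: "CARD('a) = 2 ^ l" and l2: "l \<ge> 2"
    and k3: "3 * k \<le> CARD('a)" and km: "k \<ge> m" and ms: "m \<ge> s" and s0: "s > 0"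
    and k2: "2 * k \<le> CARD('a) - m"
    and A: "card A = k" and B: "B \<subseteq> A" "card B = s"
  defines "M \<equiv> UNIV - B"
  defines "C1 \<equiv> eval_map M ` polys_lt k"
  defines "C2perp \<equiv> eval_map M ` {P \<in> polys_lt m. \<forall>b\<in>B. poly P b = 0}"
  defines "C2 \<equiv> dual_code M C2perp"
  defines "C1perp \<equiv> dual_code M C1"
  shows "C2perp \<subseteq> C1
    \<and> code_dim C1 - code_dim C2perp = k - m + s
    \<and> (\<forall>v \<in> (C1 - C2perp) \<union> (C2 - C1perp). hweight M v \<ge> min (CARD('a) - k) m - s + 1)
    \<and> card M = CARD('a) - s
    \<and> css_dim C1 C2perp = k - m + s
    \<and> css_distance M C1 C2 \<ge> min (CARD('a) - k) m - s + 1"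
proof -
  have M: "finite M" and card_M: "card M = CARD('a) - s"
    using B by (simp_all add: M_def card_Diff_subset)
  define g where "g = vanishing_poly B"
  have g: "g \<noteq> 0" "degree g = s" "\<And>\<alpha>. \<alpha> \<in> M \<Longrightarrow> poly g \<alpha> \<noteq> 0"
    using B by (simp_all add: g_def vanishing_poly_nonzero degree_vanishing_poly
        poly_vanishing_poly_eq_0_iff M_def)
  have C2perp: "C2perp = eval_map M ` {g * Q | Q. Q \<in> polys_lt (m - s)}"
    using B ms by (simp add: C2perp_def g_def vanishing_multiples_polys_lt)
  have "code_dim C1 = k" "code_dim C2perp = m - s"
    using code_dim_eval_map_multiples[OF M, of 1 k] code_dim_eval_map_multiples[OF M g(1), of "m - s"]
      card_M k3 km ms g(2) by (simp_all add: C1_def C2perp)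
  moreover have "C2perp \<subseteq> C1" using km by (auto simp: C2perp_def C1_def polys_lt_def)
  moreover have weight_C1: "m - s + 1 \<le> hweight M v" if v: "v \<in> C1" "v \<noteq> 0" for v
  proof -
    obtain P where P: "P \<in> polys_lt k" "v = eval_map M P" using v(1) by (auto simp: C1_def)
    hence "P \<noteq> 0" "degree P < k" using v(2) by (auto simp: polys_lt_def)
    thus ?thesis using card_le_hweight_eval_map_add_degree[OF M, of P] P(2) card_M k3 km ms by auto
  qed
  have weight_C2: "m - s + 1 \<le> hweight M v" if "v \<in> C2" "v \<noteq> 0" for v
    using hweight_dual_eval_map_multiples_gt[OF M g(3), of v "m - s"] that by (simp add: C2_def C2perp)
  have "0 \<in> C2perp" unfolding C2perp_def by (rule image_eqI[of _ _ 0]) auto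
  hence "m - s + 1 \<le> hweight M v" if "v \<in> (C1 - C2perp) \<union> (C2 - C1perp)" for v
    using that weight_C1 weight_C2 zero_in_dual_code[of M C1] unfolding C1perp_def by blast
  moreover have "C2 - C1perp \<noteq> {}"
  proof -
    have "m - s < card M" "m - s < k" using card_M k3 km ms s0 by auto
    then obtain w where "w \<in> C2" "w \<notin> C1perp"
      using ex_dual_eval_map_multiples_not_dual[OF M g(3)]
      unfolding C2_def C1perp_def C2perp C1_def by blast
    thus ?thesis by blast
  qed
  moreover have "C2perp \<subseteq> vecs_on M" by (auto simp: C2perp_def vecs_on_def eval_map_def)
  ultimately show ?thesis
    using css_distance_ge[OF M, of C2perp C2 C1 "m - s + 1"] card_M k3 km ms
    by (auto simp: css_dim_def C2_def C1perp_def)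
qed

end
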